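(* There is an absolute constant $C\ge0$ such that the following holds. Under the assumptions of the context, if the non-monotone Frank-Wolfe procedure is run with step size $\gamma=1/K$ for a positive integer $K$ (so that it performs exactly $K$ iterations), then its output satisfies $$f(x^{(K)})\ge e^{-1}f(x^* )-\frac{LD^2}{2K}-\frac{C}{K^2}f(x^* ).$$
   Context: $\bar u\in\mathbb{R}^n_{>0}$; $f:[0,\bar u]\to\mathbb{R}$ is differentiable, nonnegative, DR-submodular (for all $a\le b$ in the domain, $i\in[n]$, $k\ge0$ with $a+ke_i,b+ke_i$ in the domain, $f(a+ke_i)-f(a)\ge f(b+ke_i)-f(b)$) with $L$-Lipschitz gradient; $\mathcal{P}\subseteq[0,\bar u]$ is nonempty, compact, convex, down-closed ($x\in\mathcal{P}$, $0\le y\le x$ imply $y\in\mathcal{P}$) with diameter $D=\max_{x,y\in\mathcal{P}}\|x-y\|$; $x^*\in\arg\max_{x\in\mathcal{P}}f(x)$. Non-monotone Frank-Wolfe with step size $\gamma$: $x^{(0)}=0$, $t^{(0)}=0$; while $t^{(k)}<1$: choose $v^{(k)}\in\arg\max\{\langle v,\nabla f(x^{(k)})\rangle: v\in\mathcal{P},\ v\le\bar u-x^{(k)}\}$, $\gamma_k=\min\{\gamma,1-t^{(k)}\}$, $x^{(k+1)}=x^{(k)}+\gamma_k v^{(k)}$, $t^{(k+1)}=t^{(k)}+\gamma_k$. *)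

theory Defs
  imports "HOL-Analysis.Analysis"
begin

text \<open>Vectors of R^n are represented as functions nat => real whose coordinates
  with index >= n vanish; all operations are written out coordinatewise.
  This lets the dimension n be an ordinary variable, so that the constant C
  in the theorem can be chosen independently of n.\<close>

definition inner_n :: "nat \<Rightarrow> (nat \<Rightarrow> real) \<Rightarrow> (nat \<Rightarrow> real) \<Rightarrow> real" where
  "inner_n n x y = (\<Sum>i<n. x i * y i)"

definition dist_n :: "nat \<Rightarrow> (nat \<Rightarrow> real) \<Rightarrow> (nat \<Rightarrow> real) \<Rightarrow> real" where
  "dist_n n x y = L2_set (\<lambda>i. x i - y i) {..<n}"

definition box_n :: "nat \<Rightarrow> (nat \<Rightarrow> real) \<Rightarrow> (nat \<Rightarrow> real) set" where
  "box_n n u = {x. (\<forall>i<n. 0 \<le> x i \<and> x i \<le> u i) \<and> (\<forall>i\<ge>n. x i = 0)}"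

definition has_gradient_on :: "nat \<Rightarrow> ((nat \<Rightarrow> real) \<Rightarrow> real) \<Rightarrow> ((nat \<Rightarrow> real) \<Rightarrow> (nat \<Rightarrow> real))
    \<Rightarrow> (nat \<Rightarrow> real) set \<Rightarrow> bool" where
  "has_gradient_on n f g S \<longleftrightarrow>
     (\<forall>x\<in>S. (\<forall>i\<ge>n. g x i = 0) \<and>
        (\<forall>\<epsilon>>0. \<exists>\<delta>>0. \<forall>y\<in>S. dist_n n y x < \<delta> \<longrightarrow>
            \<bar>f y - f x - inner_n n (g x) (\<lambda>i. y i - x i)\<bar> \<le> \<epsilon> * dist_n n y x))"

definition lipschitz_grad :: "nat \<Rightarrow> ((nat \<Rightarrow> real) \<Rightarrow> (nat \<Rightarrow> real)) \<Rightarrow> (nat \<Rightarrow> real) set \<Rightarrow> real \<Rightarrow> bool" where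
  "lipschitz_grad n g S L \<longleftrightarrow> (\<forall>x\<in>S. \<forall>y\<in>S. dist_n n (g x) (g y) \<le> L * dist_n n x y)"

definition dr_submodular :: "nat \<Rightarrow> (nat \<Rightarrow> real) \<Rightarrow> ((nat \<Rightarrow> real) \<Rightarrow> real) \<Rightarrow> bool" where
  "dr_submodular n u f \<longleftrightarrow>
     (\<forall>a\<in>box_n n u. \<forall>b\<in>box_n n u. \<forall>i<n. \<forall>k::real.
        (\<forall>j<n. a j \<le> b j) \<and> k \<ge> 0 \<and> a(i := a i + k) \<in> box_n n u \<and> b(i := b i + k) \<in> box_n n u
        \<longrightarrow> f (a(i := a i + k)) - f a \<ge> f (b(i := b i + k)) - f b)"

definition convex_n :: "(nat \<Rightarrow> real) set \<Rightarrow> bool" where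
  "convex_n P \<longleftrightarrow> (\<forall>x\<in>P. \<forall>y\<in>P. \<forall>\<theta>::real. 0 \<le> \<theta> \<and> \<theta> \<le> 1 \<longrightarrow>
      (\<lambda>i. \<theta> * x i + (1 - \<theta>) * y i) \<in> P)"

definition down_closed_n :: "nat \<Rightarrow> (nat \<Rightarrow> real) set \<Rightarrow> bool" where
  "down_closed_n n P \<longleftrightarrow> (\<forall>x\<in>P. \<forall>y. (\<forall>i<n. 0 \<le> y i \<and> y i \<le> x i) \<and> (\<forall>i\<ge>n. y i = 0) \<longrightarrow> y \<in> P)"

definition diam_n :: "nat \<Rightarrow> (nat \<Rightarrow> real) set \<Rightarrow> real" where
  "diam_n n P = (SUP x\<in>P. SUP y\<in>P. dist_n n x y)"

text \<open>A run of non-monotone Frank-Wolfe with step size gamma: x, t are the iterates,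
  v the chosen linear-maximization solutions (any maximizer may be chosen).
  While t k < 1 the update is performed.\<close>
definition nmfw_run :: "nat \<Rightarrow> (nat \<Rightarrow> real) \<Rightarrow> ((nat \<Rightarrow> real) \<Rightarrow> (nat \<Rightarrow> real)) \<Rightarrow> (nat \<Rightarrow> real) set
    \<Rightarrow> real \<Rightarrow> (nat \<Rightarrow> nat \<Rightarrow> real) \<Rightarrow> (nat \<Rightarrow> real) \<Rightarrow> (nat \<Rightarrow> nat \<Rightarrow> real) \<Rightarrow> bool" where
  "nmfw_run n u g P \<gamma> x t v \<longleftrightarrow>
     x 0 = (\<lambda>i. 0) \<and> t 0 = 0 \<and>
     (\<forall>k. t k < 1 \<longrightarrow>
        (v k \<in> P \<and> (\<forall>i<n. v k i \<le> u i - x k i) \<and>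
         (\<forall>w\<in>P. (\<forall>i<n. w i \<le> u i - x k i) \<longrightarrow> inner_n n w (g (x k)) \<le> inner_n n (v k) (g (x k)))) \<and>
        x (Suc k) = (\<lambda>i. x k i + min \<gamma> (1 - t k) * v k i) \<and>
        t (Suc k) = t k + min \<gamma> (1 - t k))"

end

theory Submission
  imports Defs
begin

text \<open>Along a nonnegative direction a DR-submodular function is concave, so the secant slope
  lies between the directional derivatives at the two endpoints; together with nonnegativity
  this gives \<open>f (x \<squnion> z) \<ge> (1 - \<theta>) f z\<close> whenever \<open>x \<le> \<theta> u\<close>. The iterates satisfy
  \<open>x\<^sub>k \<le> (1 - (1 - \<gamma>)\<^sup>k) u\<close>, and \<open>x\<^sub>k \<squnion> z - x\<^sub>k\<close> is feasible for the linear subproblem, so the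
  descent lemma yields \<open>f(x\<^sub>k\<^sub>+\<^sub>1) \<ge> (1 - \<gamma>) f(x\<^sub>k) + \<gamma> (1 - \<gamma>)\<^sup>k f z - \<gamma>\<^sup>2 L D\<^sup>2 / 2\<close>.
  Unrolling gives \<open>f(x\<^sub>K) \<ge> (1 - 1/K)\<^sup>K\<^sup>-\<^sup>1 f z - L D\<^sup>2 / (2K)\<close>, and \<open>(1 - 1/K)\<^sup>K\<^sup>-\<^sup>1 \<ge> e\<^sup>-\<^sup>1\<close>,
  so the constant \<open>C\<close> can be taken to be \<open>0\<close>.\<close>

lemma L2_set_scale: "L2_set (\<lambda>i. c * h i) A = \<bar>c\<bar> * L2_set h A"
  unfolding L2_set_def
  by (simp add: power_mult_distrib real_sqrt_mult flip: sum_distrib_left)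

lemma inner_n_commute: "inner_n n a b = inner_n n b a"
  unfolding inner_n_def by (simp add: mult.commute)

lemma inner_n_scale_right: "inner_n n a (\<lambda>i. c * b i) = c * inner_n n a b"
  unfolding inner_n_def by (simp add: sum_distrib_left algebra_simps)

lemma inner_n_diff_left: "inner_n n (\<lambda>i. a i - b i) c = inner_n n a c - inner_n n b c"
  unfolding inner_n_def by (simp add: sum_subtractf algebra_simps)

lemma inner_n_ge_neg_L2: "- (L2_set a {..<n} * L2_set b {..<n}) \<le> inner_n n a b"
proof -
  have "- inner_n n a b \<le> (\<Sum>i<n. \<bar>a i\<bar> * \<bar>b i\<bar>)"
    unfolding inner_n_def sum_negf[symmetric]
    by (intro sum_mono) (simp add: abs_mult[symmetric])
  also have "\<dots> \<le> L2_set a {..<n} * L2_set b {..<n}"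
    by (rule L2_set_mult_ineq)
  finally show ?thesis by linarith
qed

definition segment_point :: "(nat \<Rightarrow> real) \<Rightarrow> (nat \<Rightarrow> real) \<Rightarrow> real \<Rightarrow> nat \<Rightarrow> real" where
  "segment_point x y s = (\<lambda>i. x i + s * (y i - x i))"

lemma segment_point_0 [simp]: "segment_point x y 0 = x"
  and segment_point_1 [simp]: "segment_point x y 1 = y"
  by (auto simp: segment_point_def)

lemma segment_point_diff:
  "(\<lambda>i. segment_point x y r i - segment_point x y s i) = (\<lambda>i. (r - s) * (y i - x i))"
  by (auto simp: segment_point_def algebra_simps)

lemma dist_n_segment_point:
  "dist_n n (segment_point x y r) (segment_point x y s) = \<bar>r - s\<bar> * dist_n n y x"
  unfolding dist_n_def segment_point_diff by (rule L2_set_scale)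

lemma segment_point_in_box_n:
  assumes "x \<in> box_n n u" "y \<in> box_n n u" "0 \<le> s" "s \<le> 1"
  shows "segment_point x y s \<in> box_n n u"
proof -
  have "0 \<le> (1 - s) * x i + s * y i \<and> (1 - s) * x i + s * y i \<le> u i" if "i < n" for i
  proof -
    have "0 \<le> x i" "x i \<le> u i" "0 \<le> y i" "y i \<le> u i"
      using assms that unfolding box_n_def by auto
    moreover from this have "(1 - s) * x i + s * y i \<le> (1 - s) * u i + s * u i"
      using assms by (intro add_mono mult_left_mono) auto
    moreover have "0 \<le> (1 - s) * x i + s * y i" using calculation assms by simp
    ultimately show ?thesis by (simp add: algebra_simps)
  qed
  moreover have "x + s * (y - x) = (1 - s) * x + s * y" for x y :: real
    by algebra
  ultimately show ?thesis
    using assms unfolding box_n_def segment_point_def by auto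
qed

lemma segment_point_mono:
  assumes "\<forall>i<n. x i \<le> y i" "r \<le> s"
  shows "\<forall>i<n. segment_point x y r i \<le> segment_point x y s i"
  using assms by (auto simp: segment_point_def intro: mult_right_mono)

lemma has_gradient_on_segment_derivative:
  assumes G: "has_gradient_on n f g (box_n n u)"
    and x: "x \<in> box_n n u" and y: "y \<in> box_n n u" and s: "s \<in> {0..1}"
  shows "((\<lambda>s. f (segment_point x y s)) has_real_derivative
           inner_n n (g (segment_point x y s)) (\<lambda>i. y i - x i)) (at s within {0..1})"
proof -
  let ?p = "segment_point x y"
  define N where "N = dist_n n y x"
  define D where "D = inner_n n (g (?p s)) (\<lambda>i. y i - x i)"
  have N0: "N \<ge> 0" unfolding N_def dist_n_def by simp
  have pbox: "?p r \<in> box_n n u" if "r \<in> {0..1}" for r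
    using segment_point_in_box_n[OF x y] that by auto
  have "((\<lambda>r. (f (?p r) - f (?p s)) / (r - s)) \<longlongrightarrow> D) (at s within {0..1})"
  proof (rule tendstoI)
    fix e :: real assume e: "e > 0"
    define \<epsilon> where "\<epsilon> = e / (2 * (N + 1))"
    have "\<epsilon> > 0" using e N0 unfolding \<epsilon>_def by simp
    then obtain \<delta> where \<delta>: "\<delta> > 0" and H: "\<And>z. z \<in> box_n n u \<Longrightarrow> dist_n n z (?p s) < \<delta> \<Longrightarrow>
        \<bar>f z - f (?p s) - inner_n n (g (?p s)) (\<lambda>i. z i - ?p s i)\<bar> \<le> \<epsilon> * dist_n n z (?p s)"
      using G pbox[OF s] unfolding has_gradient_on_def by meson
    show "\<forall>\<^sub>F r in at s within {0..1}. dist ((f (?p r) - f (?p s)) / (r - s)) D < e"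
      unfolding eventually_at
    proof (intro exI[of _ "\<delta> / (N + 1)"] conjI ballI impI)
      show "\<delta> / (N + 1) > 0" using \<delta> N0 by simp
      fix r assume r: "r \<in> {0..1}" and rs: "r \<noteq> s \<and> dist r s < \<delta> / (N + 1)"
      have "\<bar>r - s\<bar> * N \<le> \<bar>r - s\<bar> * (N + 1)" by (simp add: mult_left_mono)
      also have "\<dots> < \<delta>" using rs N0 by (simp add: dist_real_def field_simps)
      finally have "\<bar>f (?p r) - f (?p s) - (r - s) * D\<bar> \<le> \<epsilon> * (\<bar>r - s\<bar> * N)"
        using H[OF pbox[OF r]]
        by (simp add: dist_n_segment_point segment_point_diff inner_n_scale_right D_def N_def)
      then have "\<bar>(f (?p r) - f (?p s)) / (r - s) - D\<bar> \<le> \<epsilon> * N"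
        using rs by (simp add: field_simps abs_divide divide_le_eq mult.commute mult.left_commute)
      also have "\<epsilon> * N < e"
        using e N0 unfolding \<epsilon>_def by (simp add: field_simps add_nonneg_pos)
      finally show "dist ((f (?p r) - f (?p s)) / (r - s)) D < e" by (simp add: dist_real_def)
    qed
  qed
  then show ?thesis unfolding has_field_derivative_iff D_def .
qed

lemma secant_bounds_of_decreasing_increments:
  fixes \<phi> :: "real \<Rightarrow> real"
  assumes incr: "\<And>s t h. 0 \<le> s \<Longrightarrow> s \<le> t \<Longrightarrow> 0 \<le> h \<Longrightarrow> t + h \<le> 1 \<Longrightarrow>
      \<phi> (t + h) - \<phi> t \<le> \<phi> (s + h) - \<phi> s"
    and d0: "(\<phi> has_real_derivative D0) (at 0 within {0..1})"
    and d1: "(\<phi> has_real_derivative D1) (at 1 within {0..1})"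
  shows "\<phi> 1 - \<phi> 0 \<le> D0" and "D1 \<le> \<phi> 1 - \<phi> 0"
proof -
  define h where "h m = 1 / real (Suc m)" for m
  have h: "0 < h m" "h m \<le> 1" "h m \<noteq> 0" for m by (auto simp: h_def)
  \<comment> \<open>split \<open>[0,1]\<close> into \<open>Suc m\<close> steps of length \<open>h m\<close>: each increment lies between the last and the first\<close>
  have telescope: "\<phi> 1 - \<phi> 0 = (\<Sum>j<Suc m. \<phi> (real j * h m + h m) - \<phi> (real j * h m))" for m
  proof -
    have "(\<Sum>j<Suc m. \<phi> (real (Suc j) * h m) - \<phi> (real j * h m)) = \<phi> 1 - \<phi> 0"
      using sum_lessThan_telescope[of "\<lambda>j. \<phi> (real j * h m)" "Suc m"] by (simp add: h_def)
    then show ?thesis by (simp add: distrib_right add.commute)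
  qed
  have step: "0 \<le> real j * h m" "real j * h m + h m \<le> 1" if "j < Suc m" for j m
  proof -
    show "0 \<le> real j * h m" using h(1)[of m] by simp
    have "real j * h m \<le> real m * h m" using that h(1)[of m] by (intro mult_right_mono) auto
    also have "\<dots> = 1 - h m" by (simp add: h_def field_simps)
    finally show "real j * h m + h m \<le> 1" by simp
  qed
  have hto: "h \<longlonglongrightarrow> 0"
    unfolding h_def using LIMSEQ_inverse_real_of_nat by (simp add: inverse_eq_divide)
  have right: "filterlim h (at 0 within {0..1}) sequentially"
    using h hto by (auto simp: filterlim_at less_imp_le intro!: always_eventually)
  have left: "filterlim (\<lambda>m. 1 - h m) (at 1 within {0..1}) sequentially"
    using h hto by (auto simp: filterlim_at less_imp_le intro!: always_eventually tendsto_eq_intros)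
  have q0: "(\<lambda>m. (\<phi> (h m) - \<phi> 0) / (h m - 0)) \<longlonglongrightarrow> D0"
    using filterlim_compose[OF d0[unfolded has_field_derivative_iff] right] .
  have q1: "(\<lambda>m. (\<phi> (1 - h m) - \<phi> 1) / (1 - h m - 1)) \<longlonglongrightarrow> D1"
    using filterlim_compose[OF d1[unfolded has_field_derivative_iff] left] .
  show "\<phi> 1 - \<phi> 0 \<le> D0"
  proof (rule LIMSEQ_le_const[OF q0], intro exI allI impI)
    fix m
    have "\<phi> 1 - \<phi> 0 \<le> (\<Sum>j<Suc m. \<phi> (0 + h m) - \<phi> 0)"
      unfolding telescope[of m] using h(1)[of m] step by (intro sum_mono incr) auto
    then show "\<phi> 1 - \<phi> 0 \<le> (\<phi> (h m) - \<phi> 0) / (h m - 0)"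
      by (simp add: h_def field_simps)
  qed
  show "D1 \<le> \<phi> 1 - \<phi> 0"
  proof (rule LIMSEQ_le_const2[OF q1], intro exI allI impI)
    fix m
    have "(\<Sum>j<Suc m. \<phi> ((1 - h m) + h m) - \<phi> (1 - h m)) \<le> \<phi> 1 - \<phi> 0"
      unfolding telescope[of m] using h(1)[of m] step by (intro sum_mono incr) (auto simp: algebra_simps)
    then show "(\<phi> (1 - h m) - \<phi> 1) / (1 - h m - 1) \<le> \<phi> 1 - \<phi> 0"
      by (simp add: h_def field_simps)
  qed
qed

lemma lipschitz_grad_quadratic_lower_bound:
  assumes G: "has_gradient_on n f g (box_n n u)" and Lg: "lipschitz_grad n g (box_n n u) L"
    and x: "x \<in> box_n n u" and y: "y \<in> box_n n u"
  shows "f x + inner_n n (g x) (\<lambda>i. y i - x i) - L / 2 * (dist_n n y x)\<^sup>2 \<le> f y"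
proof -
  let ?p = "segment_point x y"
  define N where "N = dist_n n y x"
  define D0 where "D0 = inner_n n (g x) (\<lambda>i. y i - x i)"
  define \<psi> where "\<psi> s = f (?p s) - s * D0 + L / 2 * s\<^sup>2 * N\<^sup>2" for s
  define \<psi>' where "\<psi>' s = inner_n n (g (?p s)) (\<lambda>i. y i - x i) - D0 + L * s * N\<^sup>2" for s
  have N0: "N \<ge> 0" unfolding N_def dist_n_def by simp
  have der: "(\<psi> has_real_derivative \<psi>' s) (at s within {0..1})" if "s \<in> {0..1}" for s
    unfolding \<psi>_def \<psi>'_def
    by (rule derivative_eq_intros has_gradient_on_segment_derivative[OF G x y that] refl | simp)+
  \<comment> \<open>by Lipschitz continuity of \<open>g\<close> the slope of \<open>f \<circ> ?p\<close> at \<open>s\<close> is at least \<open>D0 - L s N\<^sup>2\<close>\<close>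
  have "\<psi>' s \<ge> 0" if s: "s \<in> {0..1}" for s
  proof -
    have "dist_n n (g (?p s)) (g x) \<le> L * dist_n n (?p s) x"
      using Lg segment_point_in_box_n[OF x y] x s unfolding lipschitz_grad_def by auto
    also have "dist_n n (?p s) x = s * N"
      using dist_n_segment_point[of n x y s 0] s by (simp add: N_def)
    finally have "dist_n n (g (?p s)) (g x) * N \<le> L * s * N * N"
      using N0 by (metis mult.assoc mult_right_mono)
    moreover have "- (dist_n n (g (?p s)) (g x) * N) \<le> inner_n n (g (?p s)) (\<lambda>i. y i - x i) - D0"
      using inner_n_ge_neg_L2[of "\<lambda>i. g (?p s) i - g x i" n "\<lambda>i. y i - x i"]
      unfolding D0_def inner_n_diff_left by (simp add: dist_n_def N_def)
    ultimately show ?thesis unfolding \<psi>'_def by (simp add: power2_eq_square mult.assoc)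
  qed
  then have "\<exists>d. DERIV \<psi> s :> d \<and> 0 \<le> d" if "0 < s" "s < 1" for s
    using der[of s] that at_within_Icc_at[of 0 s 1] by auto
  then have "\<psi> 0 \<le> \<psi> 1"
    using DERIV_nonneg_imp_increasing_open[of 0 1 \<psi>] DERIV_continuous_on[OF der] by simp
  then show ?thesis unfolding \<psi>_def D0_def N_def by simp
qed

lemma dr_submodular_increment_antimono:
  assumes DR: "dr_submodular n u f" and a: "a \<in> box_n n u" and b: "b \<in> box_n n u"
    and ab: "\<forall>i<n. a i \<le> b i" and c: "\<forall>i<n. c i \<ge> 0"
    and ac: "(\<lambda>i. a i + c i) \<in> box_n n u" and bc: "(\<lambda>i. b i + c i) \<in> box_n n u"
  shows "f (\<lambda>i. b i + c i) - f b \<le> f (\<lambda>i. a i + c i) - f a"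
proof -
  \<comment> \<open>add \<open>c\<close> one coordinate at a time\<close>
  define prefix where "prefix j i = (if i < j then c i else 0)" for j i
  have in_box: "(\<lambda>i. w i + prefix j i) \<in> box_n n u" if "w \<in> box_n n u" "(\<lambda>i. w i + c i) \<in> box_n n u" for w j
    using that c unfolding prefix_def box_n_def by force
  have "f (\<lambda>i. b i + prefix j i) - f b \<le> f (\<lambda>i. a i + prefix j i) - f a" if "j \<le> n" for j
    using that
  proof (induction j)
    case 0
    then show ?case by (simp add: prefix_def)
  next
    case (Suc j)
    define A where "A = (\<lambda>i. a i + prefix j i)"
    define B where "B = (\<lambda>i. b i + prefix j i)"
    have A': "A(j := A j + c j) = (\<lambda>i. a i + prefix (Suc j) i)"
      and B': "B(j := B j + c j) = (\<lambda>i. b i + prefix (Suc j) i)"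
      unfolding A_def B_def prefix_def by auto
    have j: "j < n" using Suc.prems by simp
    have "A \<in> box_n n u" "B \<in> box_n n u" "A(j := A j + c j) \<in> box_n n u" "B(j := B j + c j) \<in> box_n n u"
      unfolding A' B' unfolding A_def B_def using in_box[OF a ac] in_box[OF b bc] by auto
    moreover have "\<forall>i<n. A i \<le> B i" using ab by (simp add: A_def B_def)
    ultimately have "f (B(j := B j + c j)) - f B \<le> f (A(j := A j + c j)) - f A"
      using DR j c unfolding dr_submodular_def by blast
    moreover have "f B - f b \<le> f A - f a" using Suc by (simp add: A_def B_def)
    ultimately show ?case unfolding A' B' by simp
  qed
  moreover have "prefix n = c" using ac a unfolding prefix_def box_n_def by (auto simp: fun_eq_iff)
  ultimately show ?thesis by blast
qed

lemma dr_submodular_gradient_bounds: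
  assumes DR: "dr_submodular n u f" and G: "has_gradient_on n f g (box_n n u)"
    and x: "x \<in> box_n n u" and z: "z \<in> box_n n u" and xz: "\<forall>i<n. x i \<le> z i"
  shows "f z - f x \<le> inner_n n (g x) (\<lambda>i. z i - x i)"
    and "inner_n n (g z) (\<lambda>i. z i - x i) \<le> f z - f x"
proof -
  let ?p = "segment_point x z"
  have pbox: "?p s \<in> box_n n u" if "0 \<le> s" "s \<le> 1" for s
    using segment_point_in_box_n[OF x z that] .
  \<comment> \<open>along a nonnegative direction DR-submodularity makes \<open>f \<circ> ?p\<close> concave\<close>
  have "f (?p (t + h)) - f (?p t) \<le> f (?p (s + h)) - f (?p s)"
    if "0 \<le> s" "s \<le> t" "0 \<le> h" "t + h \<le> 1" for s t h
  proof -
    have step: "(\<lambda>i. ?p r i + h * (z i - x i)) = ?p (r + h)" for r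
      by (auto simp: segment_point_def algebra_simps)
    show ?thesis
      using dr_submodular_increment_antimono[OF DR pbox pbox segment_point_mono[OF xz],
          of s t "\<lambda>i. h * (z i - x i)"] xz that
      unfolding step by (simp add: pbox)
  qed
  from secant_bounds_of_decreasing_increments[OF this
      has_gradient_on_segment_derivative[OF G x z, of 0] has_gradient_on_segment_derivative[OF G x z, of 1]]
  show "f z - f x \<le> inner_n n (g x) (\<lambda>i. z i - x i)" "inner_n n (g z) (\<lambda>i. z i - x i) \<le> f z - f x"
    by auto
qed

lemma join_extrapolation_in_box_n:
  assumes x: "x \<in> box_n n u" and y: "y \<in> box_n n u" and \<theta>: "0 < \<theta>" "\<theta> \<le> 1"
    and x_le: "\<forall>i<n. x i \<le> \<theta> * u i"
  shows "segment_point y (\<lambda>i. max (x i) (y i)) (1 / \<theta>) \<in> box_n n u"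
proof -
  define M where "M = 1 / \<theta>"
  define z where "z = (\<lambda>i. max (x i) (y i))"
  have M1: "1 \<le> M" unfolding M_def using \<theta> by simp
  have "0 \<le> segment_point y z M i \<and> segment_point y z M i \<le> u i" if i: "i < n" for i
  proof -
    have h: "0 \<le> y i" "y i \<le> u i" "0 \<le> x i" "x i \<le> \<theta> * u i"
      using y x x_le i unfolding box_n_def by auto
    have w: "segment_point y z M i = M * z i - (M - 1) * y i"
      unfolding segment_point_def by (simp add: algebra_simps)
    have "M * x i \<le> M * (\<theta> * u i)" using h M1 by (intro mult_left_mono) auto
    then have "M * x i \<le> u i" unfolding M_def using \<theta> by simp
    moreover have "M * y i - (M - 1) * y i = y i" by (simp add: algebra_simps)
    moreover have "(M - 1) * y i \<le> M * y i" using h by (simp add: algebra_simps)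
    moreover have "M * y i \<le> M * z i" using M1 by (simp add: z_def)
    moreover have "0 \<le> (M - 1) * y i" using M1 h by simp
    ultimately show ?thesis using h unfolding w unfolding z_def by (auto simp: max_def)
  qed
  then show ?thesis
    using x y unfolding M_def z_def segment_point_def box_n_def by auto
qed

lemma dr_submodular_join_lower_bound:
  assumes DR: "dr_submodular n u f" and G: "has_gradient_on n f g (box_n n u)"
    and fnn: "\<forall>w\<in>box_n n u. 0 \<le> f w"
    and x: "x \<in> box_n n u" and y: "y \<in> box_n n u" and \<theta>: "0 \<le> \<theta>" "\<theta> \<le> 1"
    and x_le: "\<forall>i<n. x i \<le> \<theta> * u i"
  shows "(1 - \<theta>) * f y \<le> f (\<lambda>i. max (x i) (y i))"
proof -
  define z where "z = (\<lambda>i. max (x i) (y i))"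
  show ?thesis
  proof (cases "\<theta> = 0")
    case True
    have "z i = y i" for i
    proof (cases "i < n")
      case True
      then have "x i \<le> y i" using x_le y unfolding \<open>\<theta> = 0\<close> box_n_def by force
      then show ?thesis by (simp add: z_def)
    next
      case False
      then show ?thesis using x y by (simp add: z_def box_n_def)
    qed
    then have "z = y" by blast
    then show ?thesis unfolding True z_def by simp
  next
    case False
    then have "0 < \<theta>" using \<theta> by simp
    \<comment> \<open>concavity along the ray from \<open>y\<close> through \<open>z\<close>, continued to \<open>w\<close> where \<open>f w \<ge> 0\<close>\<close>
    define M where "M = 1 / \<theta>"
    have M1: "1 \<le> M" unfolding M_def using \<open>0 < \<theta>\<close> \<theta> by simp
    define w where "w = segment_point y z M"
    have zbox: "z \<in> box_n n u" using x y unfolding z_def box_n_def by auto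
    have wbox: "w \<in> box_n n u"
      unfolding w_def z_def M_def using join_extrapolation_in_box_n[OF x y \<open>0 < \<theta>\<close> \<theta>(2) x_le] by simp
    have yz: "\<forall>i<n. y i \<le> z i" unfolding z_def by simp
    have wz: "(\<lambda>i. w i - z i) = (\<lambda>i. (M - 1) * (z i - y i))"
      using segment_point_diff[of y z M 1] unfolding w_def by simp
    have zw: "\<forall>i<n. z i \<le> w i"
    proof (intro allI impI)
      fix i
      have "0 \<le> (M - 1) * (z i - y i)" using M1 by (simp add: z_def)
      then show "z i \<le> w i" using fun_cong[OF wz, of i] by simp
    qed
    define I where "I = inner_n n (g z) (\<lambda>i. z i - y i)"
    have "inner_n n (g z) (\<lambda>i. w i - z i) = (M - 1) * I"
      unfolding wz I_def by (rule inner_n_scale_right)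
    then have "f w - f z \<le> (M - 1) * I"
      using dr_submodular_gradient_bounds(1)[OF DR G zbox wbox zw] by simp
    moreover have "I \<le> f z - f y" unfolding I_def by (rule dr_submodular_gradient_bounds(2)[OF DR G y zbox yz])
    moreover have "0 \<le> f w" using fnn wbox by blast
    ultimately have "- f z \<le> (M - 1) * (f z - f y)"
      using M1 by (smt (verit) mult_left_mono)
    then have "\<theta> * (- f z) \<le> \<theta> * ((M - 1) * (f z - f y))" using \<theta> by (intro mult_left_mono) auto
    moreover have "\<theta> * (M - 1) = 1 - \<theta>" unfolding M_def using \<open>0 < \<theta>\<close> by (simp add: field_simps)
    ultimately have "- (\<theta> * f z) \<le> (1 - \<theta>) * (f z - f y)" by (simp add: mult.assoc[symmetric])
    then show ?thesis unfolding z_def[symmetric] by (simp add: algebra_simps)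
  qed
qed

lemma exp_minus_one_le_power:
  assumes "0 < K"
  shows "exp (-1) \<le> (1 - 1 / real K) ^ (K - 1)"
proof (cases "K = 1")
  case False
  define m where "m = K - 1"
  have m: "0 < m" "real K = real m + 1" using assms False unfolding m_def by auto
  have "exp (- (1 / real m)) = 1 / exp (1 / real m)" by (simp add: exp_minus field_simps)
  also have "\<dots> \<le> 1 / (1 + 1 / real m)"
    using m exp_ge_add_one_self[of "1 / real m"] by (intro divide_left_mono mult_pos_pos add_pos_pos) auto
  also have "\<dots> = 1 - 1 / real K" using m by (simp add: field_simps)
  finally have "exp (- (1 / real m)) ^ m \<le> (1 - 1 / real K) ^ m" by (rule power_mono) simp
  moreover have "exp (- (1 / real m)) ^ m = exp (-1)"
    using m by (simp flip: exp_of_nat_mult)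
  ultimately show ?thesis unfolding m_def by simp
qed simp

lemma dist_n_le_diam_n:
  assumes "P \<subseteq> box_n n u" "a \<in> P" "b \<in> P"
  shows "dist_n n a b \<le> diam_n n P"
proof -
  have bound: "dist_n n c d \<le> (\<Sum>i<n. u i)" if "c \<in> P" "d \<in> P" for c d
  proof -
    have "\<bar>c i - d i\<bar> \<le> u i" if "i < n" for i
    proof -
      have "c \<in> box_n n u" "d \<in> box_n n u" using \<open>c \<in> P\<close> \<open>d \<in> P\<close> assms(1) by auto
      then have "0 \<le> c i" "c i \<le> u i" "0 \<le> d i" "d i \<le> u i" using that unfolding box_n_def by auto
      then show ?thesis by linarith
    qed
    then have "(\<Sum>i<n. \<bar>c i - d i\<bar>) \<le> (\<Sum>i<n. u i)" by (intro sum_mono) simp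
    then show ?thesis
      unfolding dist_n_def using L2_set_le_sum_abs[of "\<lambda>i. c i - d i" "{..<n}"] by linarith
  qed
  have row: "bdd_above ((\<lambda>y. dist_n n c y) ` P)" if "c \<in> P" for c
    using bound that by (auto intro!: bdd_aboveI)
  have "bdd_above ((\<lambda>x. SUP y\<in>P. dist_n n x y) ` P)"
    using assms(2) bound by (auto intro!: bdd_aboveI cSUP_least)
  then have "(SUP y\<in>P. dist_n n a y) \<le> diam_n n P"
    unfolding diam_n_def using assms(2) by (rule cSUP_upper[rotated])
  moreover have "dist_n n a b \<le> (SUP y\<in>P. dist_n n a y)"
    using cSUP_upper[OF assms(3) row[OF assms(2)]] .
  ultimately show ?thesis by linarith
qed

lemma lipschitz_grad_box_nonneg:
  assumes "lipschitz_grad n g (box_n n u) L" "\<forall>i<n. 0 < u i" "0 < n"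
  shows "0 \<le> L"
proof -
  define b where "b = (\<lambda>i::nat. if i = 0 then u 0 else 0)"
  have box: "(\<lambda>i. 0) \<in> box_n n u" "b \<in> box_n n u"
    using assms(2,3) unfolding b_def box_n_def by (auto simp: less_imp_le)
  have "dist_n n b (\<lambda>i. 0) \<noteq> 0"
    using assms(2,3) L2_set_eq_0_iff[of "{..<n}" "\<lambda>i. b i - 0"] unfolding dist_n_def b_def by auto
  then have pos: "0 < dist_n n b (\<lambda>i. 0)" unfolding dist_n_def by (simp add: order_le_neq_trans)
  have "0 \<le> dist_n n (g b) (g (\<lambda>i. 0))" by (simp add: dist_n_def)
  also have "\<dots> \<le> L * dist_n n b (\<lambda>i. 0)"
    using assms(1) box unfolding lipschitz_grad_def by blast
  finally show ?thesis using pos by (simp add: zero_le_mult_iff)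
qed

lemma linear_recurrence_lower_bound:
  fixes a :: "nat \<Rightarrow> real"
  assumes \<gamma>: "0 \<le> \<gamma>" "\<gamma> \<le> 1" and B: "0 \<le> B" and a0: "0 \<le> a 0"
    and rec: "\<And>k. k < K \<Longrightarrow> (1 - \<gamma>) * a k + \<gamma> * (1 - \<gamma>) ^ k * F - B \<le> a (Suc k)"
    and "k \<le> K"
  shows "real k * \<gamma> * (1 - \<gamma>) ^ (k - 1) * F - real k * B \<le> a k"
  using \<open>k \<le> K\<close>
proof (induction k)
  case 0
  then show ?case using a0 by simp
next
  case (Suc k)
  let ?A = "real k * \<gamma> * (1 - \<gamma>) ^ (k - 1) * F"
  have "(1 - \<gamma>) * (?A - real k * B) \<le> (1 - \<gamma>) * a k"
    using Suc \<gamma> by (intro mult_left_mono) auto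
  moreover have "(1 - \<gamma>) * (?A - real k * B) = (1 - \<gamma>) * ?A - (1 - \<gamma>) * (real k * B)"
    by (rule right_diff_distrib)
  moreover have "(1 - \<gamma>) * ?A = real k * \<gamma> * (1 - \<gamma>) ^ k * F"
    by (cases k) auto
  moreover have "(1 - \<gamma>) * (real k * B) \<le> real k * B" using \<gamma> B by (simp add: mult_left_le_one_le)
  ultimately have "real k * \<gamma> * (1 - \<gamma>) ^ k * F - real k * B \<le> (1 - \<gamma>) * a k"
    by linarith
  then show ?case using rec[of k] Suc.prems by (simp add: algebra_simps)
qed

locale nmfw_setting =
  fixes n :: nat and u :: "nat \<Rightarrow> real" and f :: "(nat \<Rightarrow> real) \<Rightarrow> real"
    and g :: "(nat \<Rightarrow> real) \<Rightarrow> nat \<Rightarrow> real" and L :: real and P :: "(nat \<Rightarrow> real) set"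
    and z :: "nat \<Rightarrow> real" and K :: nat
    and x :: "nat \<Rightarrow> nat \<Rightarrow> real" and t :: "nat \<Rightarrow> real" and v :: "nat \<Rightarrow> nat \<Rightarrow> real"
  assumes u_pos: "\<forall>i<n. 0 < u i"
    and gradient: "has_gradient_on n f g (box_n n u)"
    and nonneg: "\<forall>y\<in>box_n n u. 0 \<le> f y"
    and dr: "dr_submodular n u f"
    and lipschitz: "lipschitz_grad n g (box_n n u) L"
    and P_box: "P \<subseteq> box_n n u"
    and down_closed: "down_closed_n n P"
    and z_in: "z \<in> P"
    and K_pos: "0 < K"
    and run: "nmfw_run n u g P (1 / real K) x t v"
begin

abbreviation \<gamma> :: real where "\<gamma> \<equiv> 1 / real K"

lemma step_size: "0 < \<gamma>" "\<gamma> \<le> 1"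
  using K_pos by auto

lemma step_active:
  assumes "t k = real k / real K" "k < K"
  shows "t k < 1" "min \<gamma> (1 - t k) = \<gamma>"
proof -
  have "\<gamma> + t k = (real k + 1) / real K" using assms(1) by (simp add: add_divide_distrib)
  also have "\<dots> \<le> 1" using assms(2) by simp
  finally have "\<gamma> \<le> 1 - t k" by simp
  then show "t k < 1" "min \<gamma> (1 - t k) = \<gamma>" using step_size(1) by linarith+
qed

lemma time_eq: "k \<le> K \<Longrightarrow> t k = real k / real K"
proof (induction k)
  case 0
  then show ?case using run unfolding nmfw_run_def by simp
next
  case (Suc k)
  then have "t k = real k / real K" "k < K" by auto
  then show ?case
    using run step_active unfolding nmfw_run_def by (simp add: add_divide_distrib)
qed

lemma iteration:
  assumes "k < K"
  shows "x (Suc k) = (\<lambda>i. x k i + \<gamma> * v k i)"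
    and "v k \<in> P" and "\<forall>i<n. v k i \<le> u i - x k i"
    and "\<And>w. w \<in> P \<Longrightarrow> \<forall>i<n. w i \<le> u i - x k i \<Longrightarrow> inner_n n w (g (x k)) \<le> inner_n n (v k) (g (x k))"
proof -
  have "t k < 1" "min \<gamma> (1 - t k) = \<gamma>" using step_active time_eq assms by auto
  with run show "x (Suc k) = (\<lambda>i. x k i + \<gamma> * v k i)"
    and "v k \<in> P" and "\<forall>i<n. v k i \<le> u i - x k i"
    and "\<And>w. w \<in> P \<Longrightarrow> \<forall>i<n. w i \<le> u i - x k i \<Longrightarrow> inner_n n w (g (x k)) \<le> inner_n n (v k) (g (x k))"
    unfolding nmfw_run_def by auto
qed

lemma iterate_bounds:
  "k \<le> K \<Longrightarrow> x k \<in> box_n n u \<and> (\<forall>i<n. x k i \<le> (1 - (1 - \<gamma>) ^ k) * u i)"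
proof (induction k)
  case 0
  then show ?case using run u_pos unfolding nmfw_run_def box_n_def by (simp add: less_imp_le)
next
  case (Suc k)
  then have k: "k < K" and IH: "x k \<in> box_n n u" "\<forall>i<n. x k i \<le> (1 - (1 - \<gamma>) ^ k) * u i"
    by auto
  have v: "v k \<in> box_n n u" "\<forall>i<n. v k i \<le> u i - x k i"
    using iteration[OF k] P_box by auto
  have "0 \<le> x (Suc k) i \<and> x (Suc k) i \<le> (1 - (1 - \<gamma>) ^ Suc k) * u i" if i: "i < n" for i
  proof -
    have h: "0 \<le> x k i" "0 \<le> v k i" "v k i \<le> u i - x k i" "x k i \<le> (1 - (1 - \<gamma>) ^ k) * u i"
      using IH v i unfolding box_n_def by auto
    have "x k i + \<gamma> * v k i \<le> (1 - \<gamma>) * x k i + \<gamma> * u i"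
      using mult_left_mono[OF h(3), of \<gamma>] step_size by (simp add: algebra_simps)
    also have "(1 - \<gamma>) * x k i \<le> (1 - \<gamma>) * ((1 - (1 - \<gamma>) ^ k) * u i)"
      using h step_size by (intro mult_left_mono) auto
    finally show ?thesis
      using h step_size iteration(1)[OF k] by (simp add: algebra_simps)
  qed
  moreover have "(1 - (1 - \<gamma>) ^ Suc k) * u i \<le> u i" if "i < n" for i
    using u_pos that step_size by (simp add: less_imp_le)
  ultimately show ?case
    using IH v iteration(1)[OF k] unfolding box_n_def by force
qed

lemma direction_gain:
  assumes k: "k < K"
  shows "(1 - \<gamma>) ^ k * f z - f (x k) \<le> inner_n n (v k) (g (x k))"
proof -
  define y where "y = (\<lambda>i. max (x k i) (z i))"
  have xk: "x k \<in> box_n n u" "\<forall>i<n. x k i \<le> (1 - (1 - \<gamma>) ^ k) * u i"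
    using iterate_bounds[of k] k by auto
  have zb: "z \<in> box_n n u" using z_in P_box by blast
  have yb: "y \<in> box_n n u" using xk zb unfolding y_def box_n_def by auto
  \<comment> \<open>\<open>y - x k\<close> lies below \<open>z\<close>, so it is a feasible direction of the linear subproblem\<close>
  have "(\<lambda>i. y i - x k i) \<in> P"
    using down_closed z_in xk zb unfolding down_closed_n_def y_def box_n_def by (auto simp: max_def)
  moreover have "\<forall>i<n. y i - x k i \<le> u i - x k i" using xk zb unfolding y_def box_n_def by auto
  ultimately have "inner_n n (\<lambda>i. y i - x k i) (g (x k)) \<le> inner_n n (v k) (g (x k))"
    by (rule iteration(4)[OF k])
  moreover have "f y - f (x k) \<le> inner_n n (\<lambda>i. y i - x k i) (g (x k))"
    using dr_submodular_gradient_bounds(1)[OF dr gradient xk(1) yb] inner_n_commute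
    unfolding y_def by auto
  moreover have "(1 - (1 - (1 - \<gamma>) ^ k)) * f z \<le> f y"
    using dr_submodular_join_lower_bound[OF dr gradient nonneg xk(1) zb _ _ xk(2)] step_size
    unfolding y_def by (simp add: power_le_one)
  ultimately show ?thesis by simp
qed

lemma curvature_bound:
  "0 \<le> L * (diam_n n P)\<^sup>2" "k < K \<Longrightarrow> L * (L2_set (v k) {..<n})\<^sup>2 \<le> L * (diam_n n P)\<^sup>2"
proof -
  have "0 \<le> L * (diam_n n P)\<^sup>2 \<and> (k < K \<longrightarrow> L * (L2_set (v k) {..<n})\<^sup>2 \<le> L * (diam_n n P)\<^sup>2)"
  proof (cases "n = 0")
    case True
    have "P \<noteq> {}" using z_in by blast
    then have "diam_n n P = 0" unfolding diam_n_def dist_n_def True by (simp add: cSUP_const)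
    then show ?thesis unfolding True by simp
  next
    case False
    then have L: "0 \<le> L" using lipschitz_grad_box_nonneg[OF lipschitz u_pos] by simp
    have "(\<lambda>i. 0) \<in> P"
      using down_closed z_in P_box unfolding down_closed_n_def box_n_def by auto
    then have "k < K \<longrightarrow> L2_set (v k) {..<n} \<le> diam_n n P"
      using dist_n_le_diam_n[OF P_box iteration(2)] unfolding dist_n_def by fastforce
    then show ?thesis using L by (auto intro!: mult_left_mono power_mono)
  qed
  then show "0 \<le> L * (diam_n n P)\<^sup>2" "k < K \<Longrightarrow> L * (L2_set (v k) {..<n})\<^sup>2 \<le> L * (diam_n n P)\<^sup>2"
    by auto
qed

lemma one_step:
  assumes k: "k < K"
  shows "(1 - \<gamma>) * f (x k) + \<gamma> * (1 - \<gamma>) ^ k * f z - \<gamma>\<^sup>2 * (L * (diam_n n P)\<^sup>2) / 2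
    \<le> f (x (Suc k))"
proof -
  have step: "(\<lambda>i. x (Suc k) i - x k i) = (\<lambda>i. \<gamma> * v k i)"
    using iteration(1)[OF k] by simp
  have inner_eq: "inner_n n (g (x k)) (\<lambda>i. x (Suc k) i - x k i) = \<gamma> * inner_n n (v k) (g (x k))"
    unfolding step inner_n_scale_right by (simp add: inner_n_commute)
  have dist_eq: "L / 2 * (dist_n n (x (Suc k)) (x k))\<^sup>2 = \<gamma>\<^sup>2 * (L * (L2_set (v k) {..<n})\<^sup>2) / 2"
    unfolding dist_n_def step L2_set_scale by (simp add: power_mult_distrib power_divide)
  have "x k \<in> box_n n u" "x (Suc k) \<in> box_n n u" using iterate_bounds k by auto
  from lipschitz_grad_quadratic_lower_bound[OF gradient lipschitz this]
  have "f (x k) + \<gamma> * inner_n n (v k) (g (x k)) - \<gamma>\<^sup>2 * (L * (L2_set (v k) {..<n})\<^sup>2) / 2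
      \<le> f (x (Suc k))"
    unfolding inner_eq dist_eq .
  moreover have "\<gamma>\<^sup>2 * (L * (L2_set (v k) {..<n})\<^sup>2) \<le> \<gamma>\<^sup>2 * (L * (diam_n n P)\<^sup>2)"
    using curvature_bound(2)[OF k] by (simp add: mult_left_mono)
  moreover have "\<gamma> * ((1 - \<gamma>) ^ k * f z - f (x k)) \<le> \<gamma> * inner_n n (v k) (g (x k))"
    using direction_gain[OF k] step_size by (intro mult_left_mono) auto
  ultimately show ?thesis by (simp add: algebra_simps)
qed

theorem output_lower_bound:
  "exp (-1) * f z - L * (diam_n n P)\<^sup>2 / (2 * real K) \<le> f (x K)"
proof -
  have "real K * \<gamma> * (1 - \<gamma>) ^ (K - 1) * f z - real K * (\<gamma>\<^sup>2 * (L * (diam_n n P)\<^sup>2) / 2) \<le> f (x K)"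
    using step_size curvature_bound(1) nonneg iterate_bounds[of 0]
    by (intro linear_recurrence_lower_bound[where K = K] one_step) (auto simp: mult.assoc)
  moreover have "real K * \<gamma> = 1" using K_pos by simp
  moreover have "real K * (\<gamma>\<^sup>2 * (L * (diam_n n P)\<^sup>2) / 2) = L * (diam_n n P)\<^sup>2 / (2 * real K)"
    by (simp add: power2_eq_square field_simps)
  moreover have "exp (-1) * f z \<le> (1 - \<gamma>) ^ (K - 1) * f z"
    using exp_minus_one_le_power[OF K_pos] nonneg z_in P_box by (auto intro: mult_right_mono)
  ultimately show ?thesis by (simp add: mult.assoc)
qed

end

theorem corollary1:
  shows "\<exists>C::real. C \<ge> 0 \<and>
    (\<forall>(n::nat) (u::nat \<Rightarrow> real) (f::(nat \<Rightarrow> real) \<Rightarrow> real) g (L::real) P xstar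
        (K::nat) x t v.
       (\<forall>i<n. u i > 0) \<and>
       has_gradient_on n f g (box_n n u) \<and>
       (\<forall>y\<in>box_n n u. f y \<ge> 0) \<and>
       dr_submodular n u f \<and>
       lipschitz_grad n g (box_n n u) L \<and>
       P \<noteq> {} \<and> P \<subseteq> box_n n u \<and> compact P \<and> convex_n P \<and> down_closed_n n P \<and>
       xstar \<in> P \<and> (\<forall>y\<in>P. f y \<le> f xstar) \<and>
       K > 0 \<and>
       nmfw_run n u g P (1 / real K) x t v
     \<longrightarrow> f (x K) \<ge> exp (-1) * f xstar - L * (diam_n n P)\<^sup>2 / (2 * real K)
                   - C / (real K)\<^sup>2 * f xstar)"
proof (intro exI[of _ 0] conjI allI impI)
  fix n u f g L P xstar K x t v
  assume "(\<forall>i<n. u i > 0) \<and>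
       has_gradient_on n f g (box_n n u) \<and>
       (\<forall>y\<in>box_n n u. f y \<ge> 0) \<and>
       dr_submodular n u f \<and>
       lipschitz_grad n g (box_n n u) L \<and>
       P \<noteq> {} \<and> P \<subseteq> box_n n u \<and> compact P \<and> convex_n P \<and> down_closed_n n P \<and>
       xstar \<in> P \<and> (\<forall>y\<in>P. f y \<le> f xstar) \<and>
       K > 0 \<and>
       nmfw_run n u g P (1 / real K) x t v"
  then interpret nmfw_setting n u f g L P xstar K x t v
    by unfold_locales auto
  show "exp (-1) * f xstar - L * (diam_n n P)\<^sup>2 / (2 * real K) - 0 / (real K)\<^sup>2 * f xstar \<le> f (x K)"
    using output_lower_bound by simp
qed simp

end
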